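(* Let $\mathcal{X}$ (with metric $d_{\mathcal X}$) and $\Theta$ be compact metric spaces and let $f_\theta:\mathcal{X}\to\mathbb{R}^p$, $\theta\in\Theta$, be functions such that for each $\theta$ the image $f_\theta(\mathcal{X})$ spans $\mathbb{R}^p$ and $(x,\theta)\mapsto f_\theta(x)$ is continuous on $\mathcal{X}\times\Theta$. Suppose $p\ge 2$. Let $n_{\rm st}\in\mathbb{N}$ and $x_1,\ldots,x_{n_{\rm st}}\in\mathcal{X}$ be such that $M(\xi_{n_{\rm st}},\theta)$ is positive definite for all $\theta\in\Theta$, where $\xi_n=\frac1n\sum_{i=1}^n\delta_{x_i}$. Let $(\theta_n)_{n\ge n_{\rm st}}$ be an arbitrary sequence in $\Theta$, and let the points $x_{n+1}$, $n\ge n_{\rm st}$, be defined recursively by $$x_{n+1}\in\arg\max_{x\in\mathcal{X}} f_{\theta_n}^{\mathsf T}(x)\,M^{-1}(\xi_n,\theta_n)\,f_{\theta_n}(x).$$ Let $\varepsilon>0$ be given. Then there exist $d>0$ and $n_0\ge n_{\rm st}$ such that $\xi_n(S)\le \frac1p+\varepsilon$ for all nonempty $S\subseteq\mathcal{X}$ with $\mathrm{diam}(S)\le d$ and all $n\ge n_0$.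
   Context: A design is a finitely supported probability measure on $\mathcal{X}$; $\delta_x$ is the point mass at $x$. The information matrix of a design $\xi$ at $\theta$ is $M(\xi,\theta)=\sum_{x\in\mathrm{supp}(\xi)}\xi(x)f_\theta(x)f_\theta^{\mathsf T}(x)$ (it is positive definite for all $\xi_n$, $n\ge n_{\rm st}$, by the choice of the starting points). $\mathrm{diam}(S)=\sup\{d_{\mathcal X}(x,z):x,z\in S\}$. The recursion is the (deterministic path of the) adaptive Wynn algorithm with arbitrary parameter estimates $\theta_n$. *)

theory Defs
  imports "HOL-Analysis.Analysis"
begin

definition emp_design :: "(nat \<Rightarrow> 'a) \<Rightarrow> nat \<Rightarrow> 'a set \<Rightarrow> real" where
  "emp_design x n S = real (card {i \<in> {1..n}. x i \<in> S}) / real n"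

definition outer :: "real^'p \<Rightarrow> real^'p^'p" where
  "outer v = (\<chi> i j. v $ i * v $ j)"

definition info_matrix :: "('b \<Rightarrow> 'a \<Rightarrow> real^'p) \<Rightarrow> (nat \<Rightarrow> 'a) \<Rightarrow> nat \<Rightarrow> 'b \<Rightarrow> real^'p^'p" where
  "info_matrix f x n \<theta> =
     (\<Sum>z\<in>x ` {1..n}. (emp_design x n {z}) *\<^sub>R outer (f \<theta> z))"

definition pos_def :: "real^'p^'p \<Rightarrow> bool" where
  "pos_def A \<longleftrightarrow> (\<forall>v. v \<noteq> 0 \<longrightarrow> v \<bullet> (A *v v) > 0)"

end

theory Submission
  imports Defs
begin

text \<open>
  Fix a step n and write M for M(xi_n, theta_n), u = f_theta_n(x_(n+1)), a = M^-1 u and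
  D = u^T a, the maximal value of the variance function f^T M^-1 f on X. The trace identity
  sum_i f(x_i)^T M^-1 f(x_i) = n tr(M^-1 M) = n p gives D >= p. Cauchy-Schwarz for the form M gives
  |a^T f(y)| <= D on X, and since M(xi_(n_st), theta) is positive definite uniformly on the compact
  set Theta, also |a| <= C D. By equicontinuity of the f_theta, every earlier point x_i close to
  x_(n+1) therefore satisfies a^T f(x_i) >= (1 - rho) D, whereas sum_i (a^T f(x_i))^2 = n a^T M a = n D;
  so at most n / (p (1 - rho)^2) earlier points lie near x_(n+1). Consequently a set of small
  diameter receives a new point only while its frequency is at most about 1/p, and between such
  visits its frequency decreases.
\<close>

lemma info_matrix_eq_sum:
  "info_matrix f x n t = (\<Sum>i\<in>{1..n}. (1 / real n) *\<^sub>R outer (f t (x i)))"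
proof -
  have "(\<Sum>i\<in>{1..n}. (1 / real n) *\<^sub>R outer (f t (x i)))
      = (\<Sum>z\<in>x ` {1..n}. \<Sum>i\<in>{i\<in>{1..n}. x i = z}. (1 / real n) *\<^sub>R outer (f t z))"
    by (subst sum.image_gen[where g = x]) (auto intro!: sum.cong)
  also have "\<dots> = (\<Sum>z\<in>x ` {1..n}. emp_design x n {z} *\<^sub>R outer (f t z))"
    by (intro sum.cong refl) (simp only: sum_constant_scaleR, simp add: emp_design_def)
  finally show ?thesis
    unfolding info_matrix_def by simp
qed

lemma info_matrix_component:
  "info_matrix f x n t $ j $ k = (\<Sum>i\<in>{1..n}. f t (x i) $ j * f t (x i) $ k) / real n"
  unfolding info_matrix_eq_sum outer_def by (simp add: sum_component sum_divide_distrib)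

lemma inner_info_matrix:
  "y \<bullet> (info_matrix f x n t *v z) = (\<Sum>i\<in>{1..n}. (y \<bullet> f t (x i)) * (z \<bullet> f t (x i))) / real n"
proof -
  have "y \<bullet> (info_matrix f x n t *v z)
      = (\<Sum>j\<in>UNIV. \<Sum>k\<in>UNIV. \<Sum>i\<in>{1..n}. y$j * f t (x i) $ j * (z$k * f t (x i) $ k) / real n)"
    by (simp add: inner_vec_def matrix_vector_mult_def info_matrix_component sum_distrib_left
        sum_distrib_right sum_divide_distrib mult_ac)
  also have "\<dots> = (\<Sum>j\<in>UNIV. \<Sum>i\<in>{1..n}. \<Sum>k\<in>UNIV. y$j * f t (x i) $ j * (z$k * f t (x i) $ k) / real n)"
    by (rule sum.cong[OF refl], rule sum.swap)
  also have "\<dots> = (\<Sum>i\<in>{1..n}. \<Sum>j\<in>UNIV. \<Sum>k\<in>UNIV. y$j * f t (x i) $ j * (z$k * f t (x i) $ k) / real n)"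
    by (rule sum.swap)
  also have "\<dots> = (\<Sum>i\<in>{1..n}. (y \<bullet> f t (x i)) * (z \<bullet> f t (x i))) / real n"
    by (simp add: inner_vec_def sum_divide_distrib sum_product)
  finally show ?thesis .
qed

lemma quadratic_info_matrix:
  "v \<bullet> (info_matrix f x n t *v v) = (\<Sum>i\<in>{1..n}. (v \<bullet> f t (x i))\<^sup>2) / real n"
  by (simp add: inner_info_matrix power2_eq_square)

lemma sum_inner_eq_trace_info_matrix:
  fixes N :: "real^'p^'p" and f :: "'b \<Rightarrow> 'a \<Rightarrow> real^'p"
  shows "(\<Sum>i\<in>{1..n}. f t (x i) \<bullet> (N *v f t (x i))) = real n * trace (N ** info_matrix f x n t)"
proof -
  let ?F = "\<lambda>i. f t (x i)"
  have "(\<Sum>i\<in>{1..n}. ?F i \<bullet> (N *v ?F i)) = (\<Sum>i\<in>{1..n}. \<Sum>j\<in>UNIV. \<Sum>k\<in>UNIV. N$j$k * (?F i$j * ?F i$k))"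
    by (simp add: inner_vec_def matrix_vector_mult_def sum_distrib_left mult_ac)
  also have "\<dots> = (\<Sum>j\<in>UNIV. \<Sum>i\<in>{1..n}. \<Sum>k\<in>UNIV. N$j$k * (?F i$j * ?F i$k))"
    by (rule sum.swap)
  also have "\<dots> = (\<Sum>j\<in>UNIV. \<Sum>k\<in>UNIV. \<Sum>i\<in>{1..n}. N$j$k * (?F i$j * ?F i$k))"
    by (rule sum.cong[OF refl], rule sum.swap)
  also have "\<dots> = (\<Sum>j\<in>UNIV. \<Sum>k\<in>UNIV. real n * (N$j$k * info_matrix f x n t $ k $ j))"
    by (cases "n = 0") (simp_all add: info_matrix_component sum_distrib_left[symmetric] mult.commute)
  also have "\<dots> = real n * trace (N ** info_matrix f x n t)"
    by (simp add: trace_def matrix_matrix_mult_def sum_distrib_left)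
  finally show ?thesis .
qed

lemma pos_def_imp_invertible:
  fixes A :: "real^'n^'n"
  assumes "pos_def A"
  shows "invertible A"
proof -
  have "v = 0" if "A *v v = 0" for v
    using assms that unfolding pos_def_def by force
  then show ?thesis
    unfolding invertible_left_inverse matrix_left_invertible_ker by blast
qed

lemma matrix_inv_inverse:
  fixes A :: "real^'n^'n"
  assumes "invertible A"
  shows "matrix_inv A ** A = mat 1" and "A ** matrix_inv A = mat 1"
  using someI_ex[OF assms[unfolded invertible_def]] unfolding matrix_inv_def by auto

lemma pos_def_info_matrix_imp_pos:
  assumes "pos_def (info_matrix f x n t)"
  shows "n > 0"
proof (rule ccontr)
  assume "\<not> n > 0"
  then have "axis k 1 \<bullet> (info_matrix f x n t *v axis k 1) = 0" for k
    by (simp add: inner_info_matrix)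
  with assms show False
    unfolding pos_def_def by (metis axis_eq_0_iff less_irrefl zero_neq_one)
qed

lemma pos_def_info_matrix_mono:
  assumes "pos_def (info_matrix f x m t)" and "m \<le> n"
  shows "pos_def (info_matrix f x n t)"
  unfolding pos_def_def
proof (intro allI impI)
  fix v :: "real^'a" assume "v \<noteq> 0"
  have "m > 0" using pos_def_info_matrix_imp_pos[OF assms(1)] .
  have "0 < (\<Sum>i\<in>{1..m}. (v \<bullet> f t (x i))\<^sup>2)"
    using assms(1) \<open>v \<noteq> 0\<close> \<open>m > 0\<close> unfolding pos_def_def quadratic_info_matrix
    by (simp add: zero_less_divide_iff)
  also have "\<dots> \<le> (\<Sum>i\<in>{1..n}. (v \<bullet> f t (x i))\<^sup>2)"
    using \<open>m \<le> n\<close> by (intro sum_mono2) auto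
  finally show "0 < v \<bullet> (info_matrix f x n t *v v)"
    unfolding quadratic_info_matrix using \<open>m > 0\<close> \<open>m \<le> n\<close> by simp
qed

lemma info_matrix_Cauchy_Schwarz:
  "(a \<bullet> (info_matrix f x n t *v g))\<^sup>2
     \<le> (a \<bullet> (info_matrix f x n t *v a)) * (g \<bullet> (info_matrix f x n t *v g))"
proof -
  have "(a \<bullet> (info_matrix f x n t *v g))\<^sup>2
      = (\<Sum>i\<in>{1..n}. (a \<bullet> f t (x i)) * (g \<bullet> f t (x i)))\<^sup>2 / (real n)\<^sup>2"
    by (simp add: inner_info_matrix power_divide)
  also have "\<dots> \<le> (\<Sum>i\<in>{1..n}. (a \<bullet> f t (x i))\<^sup>2) * (\<Sum>i\<in>{1..n}. (g \<bullet> f t (x i))\<^sup>2) / (real n)\<^sup>2"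
    by (intro divide_right_mono Cauchy_Schwarz_ineq_sum) simp
  also have "\<dots> = (a \<bullet> (info_matrix f x n t *v a)) * (g \<bullet> (info_matrix f x n t *v g))"
    by (simp add: quadratic_info_matrix power2_eq_square)
  finally show ?thesis .
qed

lemma card_le_variance_bound:
  fixes f :: "'b \<Rightarrow> 'a \<Rightarrow> real^'p"
  assumes "pos_def (info_matrix f x n t)"
    and "\<And>i. i \<in> {1..n} \<Longrightarrow> x i \<in> X"
    and "\<And>y. y \<in> X \<Longrightarrow> f t y \<bullet> (matrix_inv (info_matrix f x n t) *v f t y) \<le> D"
  shows "real CARD('p) \<le> D"
proof -
  let ?M = "info_matrix f x n t"
  have "n > 0" using pos_def_info_matrix_imp_pos[OF assms(1)] .
  have "real n * real CARD('p) = real n * trace (matrix_inv ?M ** ?M)"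
    using matrix_inv_inverse(1)[OF pos_def_imp_invertible[OF assms(1)]] by (simp add: trace_I)
  also have "\<dots> = (\<Sum>i\<in>{1..n}. f t (x i) \<bullet> (matrix_inv ?M *v f t (x i)))"
    by (rule sum_inner_eq_trace_info_matrix[symmetric])
  also have "\<dots> \<le> real n * D"
    using sum_bounded_above[of "{1..n}" _ D] assms(2,3) by simp
  finally show ?thesis using \<open>n > 0\<close> by simp
qed

lemma card_aligned_design_points_le:
  assumes "info_matrix f x n t *v a = u"
    and "K \<subseteq> {1..n}"
    and "\<And>i. i \<in> K \<Longrightarrow> a \<bullet> (u - f t (x i)) \<le> \<rho> * (u \<bullet> a)"
    and "\<rho> \<le> 1"
  shows "real (card K) * (u \<bullet> a) * (1 - \<rho>)\<^sup>2 \<le> real n"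
proof -
  define D where "D = u \<bullet> a"
  have D_eq: "real n * D = (\<Sum>i\<in>{1..n}. (a \<bullet> f t (x i))\<^sup>2)"
    using assms(1) quadratic_info_matrix[of a f x n t] unfolding D_def
    by (cases "n = 0") (simp_all add: inner_commute)
  have "D \<ge> 0"
    using assms(1) quadratic_info_matrix[of a f x n t] unfolding D_def
    by (simp add: inner_commute sum_nonneg)
  have "((1 - \<rho>) * D)\<^sup>2 \<le> (a \<bullet> f t (x i))\<^sup>2" if "i \<in> K" for i
  proof (rule power_mono)
    show "(1 - \<rho>) * D \<le> a \<bullet> f t (x i)"
      using assms(3)[OF that] unfolding D_def by (simp add: inner_diff_right inner_commute algebra_simps)
  qed (use \<open>D \<ge> 0\<close> assms(4) in simp)
  then have "real (card K) * ((1 - \<rho>) * D)\<^sup>2 \<le> (\<Sum>i\<in>K. (a \<bullet> f t (x i))\<^sup>2)"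
    using sum_bounded_below[of K "((1 - \<rho>) * D)\<^sup>2"] by simp
  also have "\<dots> \<le> real n * D"
    unfolding D_eq using assms(2) by (intro sum_mono2) auto
  finally have "D * (real (card K) * D * (1 - \<rho>)\<^sup>2) \<le> D * real n"
    by (simp add: power2_eq_square algebra_simps)
  then show ?thesis
    using \<open>D \<ge> 0\<close> unfolding D_def[symmetric]
    by (cases "D = 0") (simp_all add: mult_le_cancel_left_pos)
qed

lemma norm_inverse_info_matrix_le:
  fixes f :: "'b \<Rightarrow> 'a \<Rightarrow> real^'p"
  assumes pd: "pos_def (info_matrix f x n t)" and "m \<le> n"
    and lam: "\<And>v. lam * (norm v)\<^sup>2 \<le> (\<Sum>i\<in>{1..m}. (v \<bullet> f t (x i))\<^sup>2)"
    and X: "\<And>i. i \<in> {1..n} \<Longrightarrow> x i \<in> X"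
    and max: "\<And>y. y \<in> X \<Longrightarrow> f t y \<bullet> (matrix_inv (info_matrix f x n t) *v f t y)
                         \<le> f t z \<bullet> (matrix_inv (info_matrix f x n t) *v f t z)"
  shows "lam * (norm (matrix_inv (info_matrix f x n t) *v f t z))\<^sup>2
           \<le> real m * (f t z \<bullet> (matrix_inv (info_matrix f x n t) *v f t z))\<^sup>2"
proof -
  let ?M = "info_matrix f x n t"
  let ?N = "matrix_inv (info_matrix f x n t)"
  have MN: "?M ** ?N = mat 1"
    using matrix_inv_inverse(2)[OF pos_def_imp_invertible[OF pd]] .
  define a where "a = ?N *v f t z"
  define D where "D = f t z \<bullet> a"
  have Ma: "?M *v a = f t z"
    by (simp add: a_def matrix_vector_mul_assoc MN)
  have "D \<ge> 0"
    using quadratic_info_matrix[of a f x n t] unfolding Ma D_def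
    by (simp add: inner_commute sum_nonneg)
  have "(a \<bullet> f t y)\<^sup>2 \<le> D\<^sup>2" if "y \<in> X" for y
  proof -
    have "?M *v (?N *v f t y) = f t y"
      by (simp add: matrix_vector_mul_assoc MN)
    then have "(a \<bullet> f t y)\<^sup>2 \<le> D * (f t y \<bullet> (?N *v f t y))"
      using info_matrix_Cauchy_Schwarz[of a f x n t "?N *v f t y"] Ma
      unfolding D_def by (simp add: inner_commute)
    also have "\<dots> \<le> D * D"
      using max[OF that] \<open>D \<ge> 0\<close> unfolding D_def a_def by (simp add: mult_left_mono)
    finally show ?thesis by (simp add: power2_eq_square)
  qed
  then show ?thesis
    using lam[of a] sum_bounded_above[of "{1..m}" "\<lambda>i. (a \<bullet> f t (x i))\<^sup>2" "D\<^sup>2"] X \<open>m \<le> n\<close>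
    unfolding a_def D_def by fastforce
qed

lemma inner_le_of_norm_close:
  fixes a w :: "'a::real_inner"
  assumes "lam * (norm a)\<^sup>2 \<le> real m * D\<^sup>2" and "D \<ge> 0" and "0 \<le> \<rho>"
    and "norm w < \<rho> * sqrt (lam / real m)"
  shows "a \<bullet> w \<le> \<rho> * D"
proof -
  have "0 < \<rho> * sqrt (lam / real m)"
    using assms(4) norm_ge_zero[of w] by linarith
  then have "m > 0" "lam > 0"
    using \<open>0 \<le> \<rho>\<close> by (auto simp: zero_less_mult_iff zero_less_divide_iff)
  have "(norm a * sqrt (lam / real m))\<^sup>2 \<le> D\<^sup>2"
    using assms(1) \<open>m > 0\<close> \<open>lam > 0\<close> by (simp add: power_mult_distrib field_simps)
  then have "norm a * sqrt (lam / real m) \<le> D"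
    using \<open>D \<ge> 0\<close> by (rule power2_le_imp_le)
  have "a \<bullet> w \<le> norm a * norm w"
    by (rule norm_cauchy_schwarz)
  also have "\<dots> \<le> norm a * (\<rho> * sqrt (lam / real m))"
    using assms(4) by (intro mult_left_mono) auto
  also have "\<dots> \<le> \<rho> * D"
    using \<open>norm a * sqrt (lam / real m) \<le> D\<close> \<open>0 \<le> \<rho>\<close>
    by (metis mult.left_commute mult_left_mono)
  finally show ?thesis .
qed

lemma card_near_maximizer_le:
  fixes f :: "'b \<Rightarrow> 'a \<Rightarrow> real^'p"
  assumes pd: "pos_def (info_matrix f x n t)" and "m \<le> n"
    and lam: "\<And>v. lam * (norm v)\<^sup>2 \<le> (\<Sum>i\<in>{1..m}. (v \<bullet> f t (x i))\<^sup>2)"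
    and X: "\<And>i. i \<in> {1..n} \<Longrightarrow> x i \<in> X" and "z \<in> X"
    and max: "\<And>y. y \<in> X \<Longrightarrow> f t y \<bullet> (matrix_inv (info_matrix f x n t) *v f t y)
                         \<le> f t z \<bullet> (matrix_inv (info_matrix f x n t) *v f t z)"
    and "K \<subseteq> {1..n}" and K: "\<And>i. i \<in> K \<Longrightarrow> norm (f t z - f t (x i)) < \<rho> * sqrt (lam / real m)"
    and "0 \<le> \<rho>" "\<rho> \<le> 1"
  shows "real (card K) * real CARD('p) * (1 - \<rho>)\<^sup>2 \<le> real n"
proof -
  let ?M = "info_matrix f x n t"
  define u where "u = f t z"
  define a where "a = matrix_inv ?M *v u"
  define D where "D = u \<bullet> a"
  have Ma: "?M *v a = u"
    using matrix_inv_inverse(2)[OF pos_def_imp_invertible[OF pd]]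
    by (simp add: a_def matrix_vector_mul_assoc)
  have p_le_D: "real CARD('p) \<le> D"
    using card_le_variance_bound[OF pd X] max \<open>z \<in> X\<close> unfolding D_def a_def u_def by blast
  then have "D \<ge> 0" by (rule order_trans[rotated]) simp
  have a_bound: "lam * (norm a)\<^sup>2 \<le> real m * D\<^sup>2"
    unfolding a_def D_def u_def using norm_inverse_info_matrix_le[OF pd \<open>m \<le> n\<close> lam X max] .
  have near: "a \<bullet> (u - f t (x i)) \<le> \<rho> * D" if "i \<in> K" for i
    using inner_le_of_norm_close[OF a_bound \<open>D \<ge> 0\<close> \<open>0 \<le> \<rho>\<close>] K[OF that] unfolding u_def .
  have "real (card K) * real CARD('p) * (1 - \<rho>)\<^sup>2 \<le> real (card K) * D * (1 - \<rho>)\<^sup>2"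
    using p_le_D by (intro mult_right_mono mult_left_mono) auto
  also have "\<dots> \<le> real n"
    using Ma \<open>K \<subseteq> {1..n}\<close> near \<open>\<rho> \<le> 1\<close> unfolding D_def
    by (rule card_aligned_design_points_le)
  finally show ?thesis .
qed

lemma compact_uniform_quadratic_lower_bound:
  fixes g :: "'b::topological_space \<Rightarrow> 'i \<Rightarrow> real^'p"
  assumes "compact \<Theta>" and "finite I"
    and cont: "\<And>i. i \<in> I \<Longrightarrow> continuous_on \<Theta> (\<lambda>t. g t i)"
    and pos: "\<And>t v. t \<in> \<Theta> \<Longrightarrow> v \<noteq> 0 \<Longrightarrow> 0 < (\<Sum>i\<in>I. (v \<bullet> g t i)\<^sup>2)"
  obtains lam where "lam > 0" and "\<And>t v. t \<in> \<Theta> \<Longrightarrow> lam * (norm v)\<^sup>2 \<le> (\<Sum>i\<in>I. (v \<bullet> g t i)\<^sup>2)"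
proof (cases "\<Theta> = {}")
  case True
  then show ?thesis using that[of 1] by simp
next
  case False
  define h where "h = (\<lambda>(t, v). \<Sum>i\<in>I. (v \<bullet> g t i)\<^sup>2)"
  have "continuous_on (\<Theta> \<times> sphere 0 1) (\<lambda>q. g (fst q) i)" if "i \<in> I" for i
    by (rule continuous_on_compose2[OF cont[OF that] continuous_on_fst]) auto
  then have cont_h: "continuous_on (\<Theta> \<times> sphere 0 1) h"
    unfolding h_def case_prod_beta by (intro continuous_intros)
  have "compact (\<Theta> \<times> sphere (0::real^'p) 1)"
    by (intro compact_Times assms(1) compact_sphere)
  moreover have "\<Theta> \<times> sphere (0::real^'p) 1 \<noteq> {}"
    using False by (simp add: norm_axis_1 flip: ex_in_conv)
  ultimately obtain q where q: "q \<in> \<Theta> \<times> sphere 0 1"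
    and q_min: "\<And>q'. q' \<in> \<Theta> \<times> sphere 0 1 \<Longrightarrow> h q \<le> h q'"
    using continuous_attains_inf[OF _ _ cont_h] by meson
  have "snd q \<noteq> 0"
    using q by auto
  then have "h q > 0"
    using q pos[of "fst q" "snd q"] unfolding h_def by (auto simp: case_prod_beta)
  moreover have "h q * (norm v)\<^sup>2 \<le> (\<Sum>i\<in>I. (v \<bullet> g t i)\<^sup>2)" if "t \<in> \<Theta>" for t v
  proof (cases "v = 0")
    case False
    have "(t, v /\<^sub>R norm v) \<in> \<Theta> \<times> sphere 0 1"
      using False that by simp
    then have "h q \<le> h (t, v /\<^sub>R norm v)"
      by (rule q_min)
    also have "\<dots> * (norm v)\<^sup>2 = (\<Sum>i\<in>I. (v \<bullet> g t i)\<^sup>2)"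
      using False by (simp add: h_def sum_distrib_right sum_divide_distrib[symmetric] power_mult_distrib field_simps)
    finally show ?thesis
      by (simp add: mult_right_mono)
  qed (simp add: sum_nonneg)
  ultimately show ?thesis using that by blast
qed

lemma compact_uniformly_equicontinuous:
  fixes f :: "'b::metric_space \<Rightarrow> 'a::metric_space \<Rightarrow> 'c::metric_space"
  assumes "compact X" "compact \<Theta>" "continuous_on (X \<times> \<Theta>) (\<lambda>(z, t). f t z)" "\<eta> > 0"
  obtains \<delta> where "\<delta> > 0"
    and "\<And>t y z. t \<in> \<Theta> \<Longrightarrow> y \<in> X \<Longrightarrow> z \<in> X \<Longrightarrow> dist y z < \<delta> \<Longrightarrow> dist (f t y) (f t z) < \<eta>"
proof -
  have "uniformly_continuous_on (X \<times> \<Theta>) (\<lambda>(z, t). f t z)"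
    using assms(1-3) by (intro compact_uniformly_continuous compact_Times)
  then obtain \<delta> where "\<delta> > 0"
    and \<delta>: "\<And>p q. p \<in> X \<times> \<Theta> \<Longrightarrow> q \<in> X \<times> \<Theta> \<Longrightarrow> dist q p < \<delta>
             \<Longrightarrow> dist ((\<lambda>(z, t). f t z) q) ((\<lambda>(z, t). f t z) p) < \<eta>"
    using \<open>\<eta> > 0\<close> unfolding uniformly_continuous_on_def by metis
  show ?thesis
  proof (rule that[OF \<open>\<delta> > 0\<close>])
    fix t y z assume "t \<in> \<Theta>" "y \<in> X" "z \<in> X" "dist y z < \<delta>"
    then show "dist (f t y) (f t z) < \<eta>"
      using \<delta>[of "(z, t)" "(y, t)"] by (simp add: dist_Pair_Pair)
  qed
qed

lemma info_matrix_uniformly_pos_def: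
  fixes f :: "'b::metric_space \<Rightarrow> 'a::metric_space \<Rightarrow> real^'p"
  assumes "compact \<Theta>" and cont: "continuous_on (X \<times> \<Theta>) (\<lambda>(z, t). f t z)"
    and X: "\<And>i. i \<in> {1..m} \<Longrightarrow> x i \<in> X"
    and pd: "\<And>t. t \<in> \<Theta> \<Longrightarrow> pos_def (info_matrix f x m t)"
  obtains lam where "lam > 0"
    and "\<And>t v. t \<in> \<Theta> \<Longrightarrow> lam * (norm v)\<^sup>2 \<le> (\<Sum>i\<in>{1..m}. (v \<bullet> f t (x i))\<^sup>2)"
proof (rule compact_uniform_quadratic_lower_bound[OF \<open>compact \<Theta>\<close> finite_atLeastAtMost])
  show "continuous_on \<Theta> (\<lambda>t. f t (x i))" if "i \<in> {1..m}" for i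
  proof -
    have "continuous_on \<Theta> (\<lambda>t. (\<lambda>(z, t). f t z) (x i, t))"
      by (rule continuous_on_compose2[OF cont]) (use X[OF that] in \<open>auto intro!: continuous_intros\<close>)
    then show ?thesis by simp
  qed
  show "0 < (\<Sum>i\<in>{1..m}. (v \<bullet> f t (x i))\<^sup>2)" if "t \<in> \<Theta>" "v \<noteq> 0" for t v
    using pd[OF that(1)] that(2) unfolding pos_def_def quadratic_info_matrix
    by (auto simp: zero_less_divide_iff)
qed (use that in blast)

lemma mem_of_initial_and_successor:
  assumes "\<And>i. i \<in> {1..nst} \<Longrightarrow> x i \<in> X"
    and "\<And>n. n \<ge> nst \<Longrightarrow> x (Suc n) \<in> X"
    and "1 \<le> i"
  shows "x i \<in> X"
proof (cases "i \<le> nst")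
  case False
  then obtain n where "i = Suc n" "n \<ge> nst"
    by (metis Suc_le_D not_less_eq_eq)
  then show ?thesis using assms(2) by blast
qed (use assms in auto)

lemma obtain_square_margin:
  fixes r :: real
  assumes "1 < r"
  obtains \<rho> where "0 < \<rho>" and "\<rho> \<le> 1" and "1 \<le> r * (1 - \<rho>)\<^sup>2"
proof
  show "0 < (1 - 1 / r) / 2" and "(1 - 1 / r) / 2 \<le> 1"
    using assms by (auto simp: field_simps)
  have "r * (1 - (1 - 1 / r) / 2)\<^sup>2 = 1 + (r - 1)\<^sup>2 / (4 * r)"
    using assms by (simp add: power2_eq_square field_simps)
  then show "1 \<le> r * (1 - (1 - 1 / r) / 2)\<^sup>2"
    using assms by simp
qed

lemma wynn_frequency_le_when_visited:
  fixes X :: "'a::metric_space set" and \<Theta> :: "'b::metric_space set"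
    and f :: "'b \<Rightarrow> 'a \<Rightarrow> real^'p"
  assumes "compact X" and "compact \<Theta>"
    and cont: "continuous_on (X \<times> \<Theta>) (\<lambda>(z, t). f t z)"
    and start: "\<And>i. i \<in> {1..nst} \<Longrightarrow> x i \<in> X"
    and pd: "\<And>t. t \<in> \<Theta> \<Longrightarrow> pos_def (info_matrix f x nst t)"
    and \<theta>: "\<And>n. n \<ge> nst \<Longrightarrow> \<theta> n \<in> \<Theta>"
    and step: "\<And>n. n \<ge> nst \<Longrightarrow> x (Suc n) \<in> X \<and>
           (\<forall>z\<in>X. f (\<theta> n) z \<bullet> (matrix_inv (info_matrix f x n (\<theta> n)) *v f (\<theta> n) z)
                 \<le> f (\<theta> n) (x (Suc n)) \<bullet> (matrix_inv (info_matrix f x n (\<theta> n)) *v f (\<theta> n) (x (Suc n))))"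
    and c: "c * real CARD('p) > 1"
  obtains \<delta> where "\<delta> > 0"
    and "\<And>n S. n \<ge> nst \<Longrightarrow> S \<subseteq> X \<Longrightarrow> diameter S < \<delta> \<Longrightarrow> x (Suc n) \<in> S
           \<Longrightarrow> real (card {i\<in>{1..n}. x i \<in> S}) \<le> c * real n"
proof -
  have X: "x i \<in> X" if "1 \<le> i" for i
    using mem_of_initial_and_successor[of nst x X i] start step that by blast
  obtain lam where "lam > 0"
    and lam: "\<And>t v. t \<in> \<Theta> \<Longrightarrow> lam * (norm v)\<^sup>2 \<le> (\<Sum>i\<in>{1..nst}. (v \<bullet> f t (x i))\<^sup>2)"
    using info_matrix_uniformly_pos_def[OF \<open>compact \<Theta>\<close> cont start pd] by blast
  have "nst > 0"
    using pos_def_info_matrix_imp_pos[OF pd[OF \<theta>[OF order_refl]]] .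
  have "c > 0"
    using zero_less_mult_pos2[of c "real CARD('p)"] c by simp
  obtain \<rho> where "0 < \<rho>" "\<rho> \<le> 1" and margin: "1 \<le> c * real CARD('p) * (1 - \<rho>)\<^sup>2"
    using obtain_square_margin[OF c] by blast
  define \<eta> where "\<eta> = \<rho> * sqrt (lam / real nst)"
  have "\<eta> > 0"
    unfolding \<eta>_def using \<open>0 < \<rho>\<close> \<open>lam > 0\<close> \<open>nst > 0\<close> by simp
  obtain \<delta> where "\<delta> > 0"
    and \<delta>: "\<And>t y z. t \<in> \<Theta> \<Longrightarrow> y \<in> X \<Longrightarrow> z \<in> X \<Longrightarrow> dist y z < \<delta> \<Longrightarrow> dist (f t y) (f t z) < \<eta>"
    using compact_uniformly_equicontinuous[OF assms(1,2) cont \<open>\<eta> > 0\<close>] by blast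
  show ?thesis
  proof (rule that[OF \<open>\<delta> > 0\<close>])
    fix n S assume "n \<ge> nst" "S \<subseteq> X" "diameter S < \<delta>" "x (Suc n) \<in> S"
    let ?K = "{i\<in>{1..n}. x i \<in> S}"
    have "bounded S"
      using \<open>S \<subseteq> X\<close> \<open>compact X\<close> by (meson bounded_subset compact_imp_bounded)
    have near: "norm (f (\<theta> n) (x (Suc n)) - f (\<theta> n) (x i)) < \<rho> * sqrt (lam / real nst)"
      if "i \<in> ?K" for i
      using \<delta>[OF \<theta>[OF \<open>n \<ge> nst\<close>]] \<open>S \<subseteq> X\<close> that \<open>x (Suc n) \<in> S\<close> \<open>diameter S < \<delta>\<close>
        diameter_bounded_bound[OF \<open>bounded S\<close> \<open>x (Suc n) \<in> S\<close>, of "x i"]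
      unfolding \<eta>_def by (force simp: dist_norm)
    have "real (card ?K) * real CARD('p) * (1 - \<rho>)\<^sup>2 \<le> real n"
      by (rule card_near_maximizer_le[OF pos_def_info_matrix_mono[OF pd[OF \<theta>] \<open>n \<ge> nst\<close>]
            \<open>n \<ge> nst\<close> lam[OF \<theta>], where X = X and z = "x (Suc n)"])
        (use X step \<open>n \<ge> nst\<close> \<open>x (Suc n) \<in> S\<close> \<open>S \<subseteq> X\<close> \<open>0 < \<rho>\<close> \<open>\<rho> \<le> 1\<close> near in auto)
    then have "real (card ?K) * (c * real CARD('p) * (1 - \<rho>)\<^sup>2) \<le> c * real n"
      using \<open>c > 0\<close> by (simp add: mult_left_mono mult.assoc mult.left_commute)
    moreover have "real (card ?K) \<le> real (card ?K) * (c * real CARD('p) * (1 - \<rho>)\<^sup>2)"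
      using mult_left_mono[OF margin, of "real (card ?K)"] by simp
    ultimately show "real (card ?K) \<le> c * real n"
      by linarith
  qed
qed

lemma card_visits_le_max:
  fixes x :: "nat \<Rightarrow> 'a" and c :: real
  assumes "c \<ge> 0"
    and visit: "\<And>m. m \<ge> nst \<Longrightarrow> x (Suc m) \<in> S \<Longrightarrow> real (card {i\<in>{1..m}. x i \<in> S}) \<le> c * real m"
    and "n \<ge> nst"
  shows "real (card {i\<in>{1..n}. x i \<in> S}) \<le> max (real nst) (c * real n + 1)"
  using \<open>n \<ge> nst\<close>
proof (induction n rule: dec_induct)
  case base
  have "card {i\<in>{1..nst}. x i \<in> S} \<le> card {1..nst}"
    by (rule card_mono) auto
  then show ?case by simp
next
  case (step m)
  show ?case
  proof (cases "x (Suc m) \<in> S")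
    case True
    then have "{i\<in>{1..Suc m}. x i \<in> S} = insert (Suc m) {i\<in>{1..m}. x i \<in> S}"
      by auto
    then show ?thesis
      using visit[OF \<open>m \<ge> nst\<close> True] \<open>c \<ge> 0\<close> by (simp add: algebra_simps)
  next
    case False
    then have "{i\<in>{1..Suc m}. x i \<in> S} = {i\<in>{1..m}. x i \<in> S}"
      by (auto simp: le_Suc_eq)
    then show ?thesis
      using step.IH \<open>c \<ge> 0\<close> by (simp add: algebra_simps max_def split: if_splits)
  qed
qed

lemma eventually_max_le_linear:
  fixes c \<epsilon> :: real
  assumes "c \<ge> 0" and "\<epsilon> > 0"
  obtains n0 :: nat where "n0 \<ge> k"
    and "\<And>n. n \<ge> n0 \<Longrightarrow> max (real k) (c * real n + 1) \<le> (c + \<epsilon>) * real n"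
proof -
  obtain n1 :: nat where n1: "real k + 1 < real n1 * \<epsilon>"
    using ex_less_of_nat_mult[OF \<open>\<epsilon> > 0\<close>] by blast
  show ?thesis
  proof (rule that[of "max k n1"])
    fix n assume "max k n1 \<le> n"
    then have "\<epsilon> * real n1 \<le> \<epsilon> * real n"
      using \<open>\<epsilon> > 0\<close> by (intro mult_left_mono) auto
    then have "real k + 1 \<le> \<epsilon> * real n"
      using n1 by (simp add: mult.commute)
    then show "max (real k) (c * real n + 1) \<le> (c + \<epsilon>) * real n"
      using \<open>c \<ge> 0\<close> by (simp add: algebra_simps add_increasing2)
  qed simp
qed

theorem lemma2p2:
  fixes X :: "'a::metric_space set" and \<Theta> :: "'b::metric_space set"
    and f :: "'b \<Rightarrow> 'a \<Rightarrow> real^'p"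
    and x :: "nat \<Rightarrow> 'a" and \<theta> :: "nat \<Rightarrow> 'b"
    and nst :: nat and \<epsilon> :: real
  assumes "compact X" and "compact \<Theta>"
    and "\<And>t. t \<in> \<Theta> \<Longrightarrow> span (f t ` X) = UNIV"
    and "continuous_on (X \<times> \<Theta>) (\<lambda>(z, t). f t z)"
    and "CARD('p) \<ge> 2"
    and "\<And>i. i \<in> {1..nst} \<Longrightarrow> x i \<in> X"
    and "\<And>t. t \<in> \<Theta> \<Longrightarrow> pos_def (info_matrix f x nst t)"
    and "\<And>n. n \<ge> nst \<Longrightarrow> \<theta> n \<in> \<Theta>"
    and "\<And>n. n \<ge> nst \<Longrightarrow> x (Suc n) \<in> X \<and>
           (\<forall>z\<in>X. f (\<theta> n) z \<bullet> (matrix_inv (info_matrix f x n (\<theta> n)) *v f (\<theta> n) z)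
                 \<le> f (\<theta> n) (x (Suc n)) \<bullet> (matrix_inv (info_matrix f x n (\<theta> n)) *v f (\<theta> n) (x (Suc n))))"
    and "\<epsilon> > 0"
  shows "\<exists>d>0. \<exists>n0\<ge>nst. \<forall>n\<ge>n0. \<forall>S. S \<subseteq> X \<and> S \<noteq> {} \<and> diameter S \<le> d \<longrightarrow>
           emp_design x n S \<le> 1 / real CARD('p) + \<epsilon>"
proof -
  define c where "c = 1 / real CARD('p) + \<epsilon> / 2"
  obtain \<delta> where "\<delta> > 0" and visit: "\<And>n S. n \<ge> nst \<Longrightarrow> S \<subseteq> X \<Longrightarrow> diameter S < \<delta> \<Longrightarrow> x (Suc n) \<in> S
      \<Longrightarrow> real (card {i\<in>{1..n}. x i \<in> S}) \<le> c * real n"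
    using wynn_frequency_le_when_visited[OF assms(1,2,4,6-9), of c] \<open>\<epsilon> > 0\<close> unfolding c_def
    by (auto simp: field_simps)
  obtain n0 where "n0 \<ge> nst"
    and n0: "\<And>n. n \<ge> n0 \<Longrightarrow> max (real nst) (c * real n + 1) \<le> (c + \<epsilon> / 2) * real n"
    using eventually_max_le_linear[of c "\<epsilon> / 2"] \<open>\<epsilon> > 0\<close> unfolding c_def by auto
  have "emp_design x n S \<le> 1 / real CARD('p) + \<epsilon>"
    if "n \<ge> n0" "S \<subseteq> X" "diameter S \<le> \<delta> / 2" for n S
  proof -
    have "real (card {i\<in>{1..n}. x i \<in> S}) \<le> max (real nst) (c * real n + 1)"
      by (rule card_visits_le_max) (use visit that \<open>n0 \<ge> nst\<close> \<open>\<delta> > 0\<close> \<open>\<epsilon> > 0\<close> c_def in auto)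
    also have "\<dots> \<le> (c + \<epsilon> / 2) * real n"
      using n0 \<open>n \<ge> n0\<close> .
    finally show ?thesis
      unfolding emp_design_def c_def using \<open>\<epsilon> > 0\<close> by (cases "n = 0") (simp_all add: field_simps)
  qed
  then show ?thesis
    using \<open>\<delta> > 0\<close> \<open>n0 \<ge> nst\<close> by (intro exI[of _ "\<delta> / 2"]) auto
qed

end
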